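(* Let $1\le i<k<j<n$. Then in ${\boldsymbol U}_{v}(\mathfrak q_n)$ the following hold: \[ \mathsf E_{i,j}=-\mathsf E_{i,k}\mathsf E_{k,j}+v^{-1}\mathsf E_{k,j}\mathsf E_{i,k},\qquad \overline{\mathsf E}_{i,j}=-\mathsf E_{i,k}\overline{\mathsf E}_{k,j}+v^{-1}\overline{\mathsf E}_{k,j}\mathsf E_{i,k}, \] \[ \mathsf E_{j,i}=-\mathsf E_{j,k}\mathsf E_{k,i}+v\,\mathsf E_{k,i}\mathsf E_{j,k},\qquad \overline{\mathsf E}_{j,i}=-\overline{\mathsf E}_{j,k}\mathsf E_{k,i}+v\,\mathsf E_{k,i}\overline{\mathsf E}_{j,k}. \]
   Context: Let $v$ be an indeterminate. The quantum queer superalgebra ${\boldsymbol U}_{v}(\mathfrak q_n)$ is the associative superalgebra over $\mathbb Q(v)$ generated by even generators $\mathsf K_i,\mathsf K_i^{-1}$ ($1\le i\le n$), $\mathsf E_j,\mathsf F_j$ ($1\le j\le n-1$) and odd generators $\mathsf K_{\bar i}$ ($1\le i\le n$), $\mathsf E_{\bar j},\mathsf F_{\bar j}$ ($1\le j\le n-1$), subject to the following relations (indices are taken only where they make sense), where $(\epsilon_i,\alpha_j)=\delta_{i,j}-\delta_{i,j+1}$: (QQ1) $\mathsf K_i\mathsf K_i^{-1}=\mathsf K_i^{-1}\mathsf K_i=1$, $\mathsf K_i\mathsf K_j=\mathsf K_j\mathsf K_i$, $\mathsf K_i\mathsf K_{\bar j}=\mathsf K_{\bar j}\mathsf K_i$,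 $\mathsf K_{\bar i}\mathsf K_{\bar j}+\mathsf K_{\bar j}\mathsf K_{\bar i}=2\delta_{i,j}\frac{\mathsf K_i^2-\mathsf K_i^{-2}}{v^2-v^{-2}}$. (QQ2) $\mathsf K_i\mathsf E_j=v^{(\epsilon_i,\alpha_j)}\mathsf E_j\mathsf K_i$, $\mathsf K_i\mathsf E_{\bar j}=v^{(\epsilon_i,\alpha_j)}\mathsf E_{\bar j}\mathsf K_i$, $\mathsf K_i\mathsf F_j=v^{-(\epsilon_i,\alpha_j)}\mathsf F_j\mathsf K_i$, $\mathsf K_i\mathsf F_{\bar j}=v^{-(\epsilon_i,\alpha_j)}\mathsf F_{\bar j}\mathsf K_i$. (QQ3) $\mathsf K_{\bar i}\mathsf E_i-v\mathsf E_i\mathsf K_{\bar i}=\mathsf E_{\bar i}\mathsf K_i^{-1}$, $v\mathsf K_{\bar i}\mathsf E_{i-1}-\mathsf E_{i-1}\mathsf K_{\bar i}=-\mathsf K_i^{-1}\mathsf E_{\overline{i-1}}$, $\mathsf K_{\bar i}\mathsf F_i-v\mathsf F_i\mathsf K_{\bar i}=-\mathsf F_{\bar i}\mathsf K_i$, $v\mathsf K_{\bar i}\mathsf F_{i-1}-\mathsf F_{i-1}\mathsf K_{\bar i}=\mathsf K_i\mathsf F_{\overline{i-1}}$, $\mathsf K_{\bar i}\mathsf E_{\bar i}+v\mathsf E_{\bar i}\mathsf K_{\bar i}=\mathsf E_i\mathsf K_i^{-1}$, $v\mathsf K_{\bar i}\mathsf E_{\overline{i-1}}+\mathsf E_{\overline{i-1}}\mathsf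 K_{\bar i}=\mathsf K_i^{-1}\mathsf E_{i-1}$, $\mathsf K_{\bar i}\mathsf F_{\bar i}+v\mathsf F_{\bar i}\mathsf K_{\bar i}=\mathsf F_i\mathsf K_i$, $v\mathsf K_{\bar i}\mathsf F_{\overline{i-1}}+\mathsf F_{\overline{i-1}}\mathsf K_{\bar i}=\mathsf K_i\mathsf F_{i-1}$, and for $j\ne i,i-1$: $\mathsf K_{\bar i}\mathsf E_j=\mathsf E_j\mathsf K_{\bar i}$, $\mathsf K_{\bar i}\mathsf F_j=\mathsf F_j\mathsf K_{\bar i}$, $\mathsf K_{\bar i}\mathsf E_{\bar j}=-\mathsf E_{\bar j}\mathsf K_{\bar i}$, $\mathsf K_{\bar i}\mathsf F_{\bar j}=-\mathsf F_{\bar j}\mathsf K_{\bar i}$. (QQ4) $\mathsf E_i\mathsf F_j-\mathsf F_j\mathsf E_i=\delta_{i,j}\frac{\mathsf K_i\mathsf K_{i+1}^{-1}-\mathsf K_i^{-1}\mathsf K_{i+1}}{v-v^{-1}}$, $\mathsf E_{\bar i}\mathsf F_{\bar j}+\mathsf F_{\bar j}\mathsf E_{\bar i}=\delta_{i,j}\big(\frac{\mathsf K_i\mathsf K_{i+1}-\mathsf K_i^{-1}\mathsf K_{i+1}^{-1}}{v-v^{-1}}+(v-v^{-1})\mathsf K_{\bar i}\mathsf K_{\overline{i+1}}\big)$, $\mathsf E_i\mathsf F_{\bar j}-\mathsf F_{\bar j}\mathsf E_i=\delta_{i,j}(\mathsf K_{i+1}^{-1}\mathsf K_{\bar i}-\mathsf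 K_{\overline{i+1}}\mathsf K_i^{-1})$, $\mathsf E_{\bar i}\mathsf F_j-\mathsf F_j\mathsf E_{\bar i}=\delta_{i,j}(\mathsf K_{i+1}\mathsf K_{\bar i}-\mathsf K_{\overline{i+1}}\mathsf K_i)$. (QQ5) $\mathsf E_{\bar i}^2=-\frac{v-v^{-1}}{v+v^{-1}}\mathsf E_i^2$, $\mathsf F_{\bar i}^2=\frac{v-v^{-1}}{v+v^{-1}}\mathsf F_i^2$; for $|i-j|\ne1$: $\mathsf E_i\mathsf E_{\bar j}=\mathsf E_{\bar j}\mathsf E_i$, $\mathsf F_i\mathsf F_{\bar j}=\mathsf F_{\bar j}\mathsf F_i$; for $|i-j|>1$: $\mathsf E_i\mathsf E_j=\mathsf E_j\mathsf E_i$, $\mathsf F_i\mathsf F_j=\mathsf F_j\mathsf F_i$, $\mathsf E_{\bar i}\mathsf E_{\bar j}=-\mathsf E_{\bar j}\mathsf E_{\bar i}$, $\mathsf F_{\bar i}\mathsf F_{\bar j}=-\mathsf F_{\bar j}\mathsf F_{\bar i}$; $\mathsf E_i\mathsf E_{i+1}-v\mathsf E_{i+1}\mathsf E_i=\mathsf E_{\bar i}\mathsf E_{\overline{i+1}}+v\mathsf E_{\overline{i+1}}\mathsf E_{\bar i}$, $\mathsf E_i\mathsf E_{\overline{i+1}}-v\mathsf E_{\overline{i+1}}\mathsf E_i=\mathsf E_{\bar i}\mathsf E_{i+1}-v\mathsf E_{i+1}\mathsf E_{\bar i}$, $\mathsf F_i\mathsf F_{i+1}-v\mathsf F_{i+1}\mathsf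 F_i=-(\mathsf F_{\bar i}\mathsf F_{\overline{i+1}}+v\mathsf F_{\overline{i+1}}\mathsf F_{\bar i})$, $\mathsf F_i\mathsf F_{\overline{i+1}}-v\mathsf F_{\overline{i+1}}\mathsf F_i=\mathsf F_{\bar i}\mathsf F_{i+1}-v\mathsf F_{i+1}\mathsf F_{\bar i}$. (QQ6) for $|i-j|=1$: $\mathsf E_i^2X-(v+v^{-1})\mathsf E_iX\mathsf E_i+X\mathsf E_i^2=0$ for $X\in\{\mathsf E_j,\mathsf E_{\bar j}\}$ and $\mathsf F_i^2Y-(v+v^{-1})\mathsf F_iY\mathsf F_i+Y\mathsf F_i^2=0$ for $Y\in\{\mathsf F_j,\mathsf F_{\bar j}\}$. Quantum root vectors: for $1\le i\le n-1$ put $\mathsf E_{i,i+1}=\mathsf E_i$, $\overline{\mathsf E}_{i,i+1}=\mathsf E_{\bar i}$, $\mathsf E_{i+1,i}=\mathsf F_i$, $\overline{\mathsf E}_{i+1,i}=\mathsf F_{\bar i}$, and recursively for $i+1<j\le n$: $\mathsf E_{i,j}=-\mathsf E_{i,j-1}\mathsf E_{j-1}+v^{-1}\mathsf E_{j-1}\mathsf E_{i,j-1}$, $\overline{\mathsf E}_{i,j}=-\mathsf E_{i,j-1}\mathsf E_{\overline{j-1}}+v^{-1}\mathsf E_{\overline{j-1}}\mathsf E_{i,j-1}$, $\mathsf E_{j,i}=-\mathsf F_{j-1}\mathsf E_{j-1,i}+v\mathsf E_{j-1,i}\mathsf F_{j-1}$, $\overline{\mathsf E}_{j,i}=-\mathsf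 F_{\overline{j-1}}\mathsf E_{j-1,i}+v\mathsf E_{j-1,i}\mathsf F_{\overline{j-1}}$. *)

theory Defs
  imports Main "HOL-Computational_Algebra.Polynomial" "HOL-Computational_Algebra.Fraction_Field"
begin

type_synonym qfield = "rat poly fract"

definition qv :: qfield where "qv = Fract [:0, 1:] 1"

definition qvpow :: "int \<Rightarrow> qfield" where
  "qvpow e = (if 0 \<le> e then qv ^ nat e else inverse qv ^ nat (- e))"

text \<open>(epsilon_i, alpha_j) = delta_{i,j} - delta_{i,j+1}\<close>
definition epsalpha :: "nat \<Rightarrow> nat \<Rightarrow> int" where
  "epsalpha i j = (if i = j then 1 else 0) - (if i = j + 1 then 1 else 0)"

text \<open>A Q(v)-algebra structure on a ring: a unital ring homomorphism into the centre.\<close>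
definition qalg :: "(qfield \<Rightarrow> 'a::ring_1) \<Rightarrow> bool" where
  "qalg s \<longleftrightarrow> s 1 = 1 \<and> (\<forall>a b. s (a + b) = s a + s b) \<and> (\<forall>a b. s (a * b) = s a * s b)
     \<and> (\<forall>a x. s a * x = x * s a)"

text \<open>The defining relations (QQ1)-(QQ6) of U_v(q_n), for families of elements
  K, Ki (= K^{-1}), Kb (= K bar), E, Eb, F, Fb in a Q(v)-algebra with structure map s.
  An identity holds in U_v(q_n) iff it holds for all such data (universal property).\<close>
definition qq_rels :: "nat \<Rightarrow> (qfield \<Rightarrow> 'a::ring_1) \<Rightarrow> (nat \<Rightarrow> 'a) \<Rightarrow> (nat \<Rightarrow> 'a) \<Rightarrow> (nat \<Rightarrow> 'a)
    \<Rightarrow> (nat \<Rightarrow> 'a) \<Rightarrow> (nat \<Rightarrow> 'a) \<Rightarrow> (nat \<Rightarrow> 'a) \<Rightarrow> (nat \<Rightarrow> 'a) \<Rightarrow> bool" where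
  "qq_rels n s K Ki Kb E Eb F Fb \<longleftrightarrow>
   (let v = s qv; vi = s (inverse qv) in
   \<comment> \<open>QQ1\<close>
   (\<forall>i\<in>{1..n}. K i * Ki i = 1 \<and> Ki i * K i = 1) \<and>
   (\<forall>i\<in>{1..n}. \<forall>j\<in>{1..n}. K i * K j = K j * K i \<and> K i * Kb j = Kb j * K i \<and>
      Kb i * Kb j + Kb j * Kb i =
        (if i = j then 2 * ((K i ^ 2 - Ki i ^ 2) * s (inverse (qv ^ 2 - inverse qv ^ 2))) else 0)) \<and>
   \<comment> \<open>QQ2\<close>
   (\<forall>i\<in>{1..n}. \<forall>j\<in>{1..n-1}.
      K i * E j = s (qvpow (epsalpha i j)) * E j * K i \<and>
      K i * Eb j = s (qvpow (epsalpha i j)) * Eb j * K i \<and>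
      K i * F j = s (qvpow (- epsalpha i j)) * F j * K i \<and>
      K i * Fb j = s (qvpow (- epsalpha i j)) * Fb j * K i) \<and>
   \<comment> \<open>QQ3\<close>
   (\<forall>i\<in>{1..n}. i \<le> n - 1 \<longrightarrow>
      Kb i * E i - v * E i * Kb i = Eb i * Ki i \<and>
      Kb i * F i - v * F i * Kb i = - (Fb i * K i) \<and>
      Kb i * Eb i + v * Eb i * Kb i = E i * Ki i \<and>
      Kb i * Fb i + v * Fb i * Kb i = F i * K i) \<and>
   (\<forall>i\<in>{1..n}. 2 \<le> i \<longrightarrow>
      v * Kb i * E (i - 1) - E (i - 1) * Kb i = - (Ki i * Eb (i - 1)) \<and>
      v * Kb i * F (i - 1) - F (i - 1) * Kb i = K i * Fb (i - 1) \<and>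
      v * Kb i * Eb (i - 1) + Eb (i - 1) * Kb i = Ki i * E (i - 1) \<and>
      v * Kb i * Fb (i - 1) + Fb (i - 1) * Kb i = K i * F (i - 1)) \<and>
   (\<forall>i\<in>{1..n}. \<forall>j\<in>{1..n-1}. j \<noteq> i \<and> j \<noteq> i - 1 \<longrightarrow>
      Kb i * E j = E j * Kb i \<and> Kb i * F j = F j * Kb i \<and>
      Kb i * Eb j = - (Eb j * Kb i) \<and> Kb i * Fb j = - (Fb j * Kb i)) \<and>
   \<comment> \<open>QQ4\<close>
   (\<forall>i\<in>{1..n-1}. \<forall>j\<in>{1..n-1}.
      E i * F j - F j * E i =
        (if i = j then (K i * Ki (i + 1) - Ki i * K (i + 1)) * s (inverse (qv - inverse qv)) else 0) \<and>
      Eb i * Fb j + Fb j * Eb i =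
        (if i = j then (K i * K (i + 1) - Ki i * Ki (i + 1)) * s (inverse (qv - inverse qv))
                       + s (qv - inverse qv) * Kb i * Kb (i + 1) else 0) \<and>
      E i * Fb j - Fb j * E i = (if i = j then Ki (i + 1) * Kb i - Kb (i + 1) * Ki i else 0) \<and>
      Eb i * F j - F j * Eb i = (if i = j then K (i + 1) * Kb i - Kb (i + 1) * K i else 0)) \<and>
   \<comment> \<open>QQ5\<close>
   (\<forall>i\<in>{1..n-1}.
      Eb i ^ 2 = - (s ((qv - inverse qv) / (qv + inverse qv)) * E i ^ 2) \<and>
      Fb i ^ 2 = s ((qv - inverse qv) / (qv + inverse qv)) * F i ^ 2) \<and>
   (\<forall>i\<in>{1..n-1}. \<forall>j\<in>{1..n-1}. i \<noteq> j + 1 \<and> j \<noteq> i + 1 \<longrightarrow>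
      E i * Eb j = Eb j * E i \<and> F i * Fb j = Fb j * F i) \<and>
   (\<forall>i\<in>{1..n-1}. \<forall>j\<in>{1..n-1}. i > j + 1 \<or> j > i + 1 \<longrightarrow>
      E i * E j = E j * E i \<and> F i * F j = F j * F i \<and>
      Eb i * Eb j = - (Eb j * Eb i) \<and> Fb i * Fb j = - (Fb j * Fb i)) \<and>
   (\<forall>i. 1 \<le> i \<and> i + 1 \<le> n - 1 \<longrightarrow>
      E i * E (i + 1) - v * E (i + 1) * E i = Eb i * Eb (i + 1) + v * Eb (i + 1) * Eb i \<and>
      E i * Eb (i + 1) - v * Eb (i + 1) * E i = Eb i * E (i + 1) - v * E (i + 1) * Eb i \<and>
      F i * F (i + 1) - v * F (i + 1) * F i = - (Fb i * Fb (i + 1) + v * Fb (i + 1) * Fb i) \<and>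
      F i * Fb (i + 1) - v * Fb (i + 1) * F i = Fb i * F (i + 1) - v * F (i + 1) * Fb i) \<and>
   \<comment> \<open>QQ6\<close>
   (\<forall>i\<in>{1..n-1}. \<forall>j\<in>{1..n-1}. (i = j + 1 \<or> j = i + 1) \<longrightarrow>
      (\<forall>X\<in>{E j, Eb j}. E i ^ 2 * X - s (qv + inverse qv) * E i * X * E i + X * E i ^ 2 = 0) \<and>
      (\<forall>Y\<in>{F j, Fb j}. F i ^ 2 * Y - s (qv + inverse qv) * F i * Y * F i + Y * F i ^ 2 = 0)))"

text \<open>Quantum root vectors. Eup s E i d = E_{i,i+d+1}; Ebup = bar E_{i,i+d+1};
  Edn s F i d = E_{i+d+1,i}; Ebdn = bar E_{i+d+1,i}.\<close>
primrec Eup :: "(qfield \<Rightarrow> 'a::ring_1) \<Rightarrow> (nat \<Rightarrow> 'a) \<Rightarrow> nat \<Rightarrow> nat \<Rightarrow> 'a" where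
  "Eup s E i 0 = E i"
| "Eup s E i (Suc d) = - (Eup s E i d * E (i + d + 1)) + s (inverse qv) * E (i + d + 1) * Eup s E i d"

primrec Ebup :: "(qfield \<Rightarrow> 'a::ring_1) \<Rightarrow> (nat \<Rightarrow> 'a) \<Rightarrow> (nat \<Rightarrow> 'a) \<Rightarrow> nat \<Rightarrow> nat \<Rightarrow> 'a" where
  "Ebup s E Eb i 0 = Eb i"
| "Ebup s E Eb i (Suc d) = - (Eup s E i d * Eb (i + d + 1)) + s (inverse qv) * Eb (i + d + 1) * Eup s E i d"

primrec Edn :: "(qfield \<Rightarrow> 'a::ring_1) \<Rightarrow> (nat \<Rightarrow> 'a) \<Rightarrow> nat \<Rightarrow> nat \<Rightarrow> 'a" where
  "Edn s F i 0 = F i"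
| "Edn s F i (Suc d) = - (F (i + d + 1) * Edn s F i d) + s qv * Edn s F i d * F (i + d + 1)"

primrec Ebdn :: "(qfield \<Rightarrow> 'a::ring_1) \<Rightarrow> (nat \<Rightarrow> 'a) \<Rightarrow> (nat \<Rightarrow> 'a) \<Rightarrow> nat \<Rightarrow> nat \<Rightarrow> 'a" where
  "Ebdn s F Fb i 0 = Fb i"
| "Ebdn s F Fb i (Suc d) = - (Fb (i + d + 1) * Edn s F i d) + s qv * Edn s F i d * Fb (i + d + 1)"

definition Eroot :: "(qfield \<Rightarrow> 'a::ring_1) \<Rightarrow> (nat \<Rightarrow> 'a) \<Rightarrow> (nat \<Rightarrow> 'a) \<Rightarrow> nat \<Rightarrow> nat \<Rightarrow> 'a" where
  "Eroot s E F a b = (if a < b then Eup s E a (b - a - 1) else Edn s F b (a - b - 1))"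

definition Ebroot :: "(qfield \<Rightarrow> 'a::ring_1) \<Rightarrow> (nat \<Rightarrow> 'a) \<Rightarrow> (nat \<Rightarrow> 'a) \<Rightarrow> (nat \<Rightarrow> 'a) \<Rightarrow> (nat \<Rightarrow> 'a) \<Rightarrow> nat \<Rightarrow> nat \<Rightarrow> 'a" where
  "Ebroot s E Eb F Fb a b = (if a < b then Ebup s E Eb a (b - a - 1) else Ebdn s F Fb b (a - b - 1))"

end

theory Submission
  imports Defs
begin

text \<open>Each root vector is a v-twisted commutator [x, y]_q = -xy + qyx of shorter ones. When a
  commutes with c, these commutators are associative: [[a, b]_q, c]_q = [a, [b, c]_q]_q. Since
  E_l commutes with E_m whenever l and m are not adjacent, E_{i,k} commutes with every simple
  root vector E_m for m > k, so the defining recursion E_{i,j} = [E_{i,j-1}, E_{j-1}]_q can be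
  re-bracketed step by step into [E_{i,k}, E_{k,j}]_q. The barred root vectors are the unbarred
  ones for the family in which E_{j-1} is replaced by its odd partner, and the lower root vectors
  are treated in the same way.\<close>

definition qbracket :: "'a::ring_1 \<Rightarrow> 'a \<Rightarrow> 'a \<Rightarrow> 'a" where
  "qbracket q x y = - (x * y) + q * y * x"

definition nonadjacent_commute :: "nat \<Rightarrow> nat \<Rightarrow> (nat \<Rightarrow> 'a::ring_1) \<Rightarrow> bool" where
  "nonadjacent_commute lo hi E \<longleftrightarrow>
     (\<forall>l m. lo \<le> l \<longrightarrow> l + 1 < m \<longrightarrow> m \<le> hi \<longrightarrow> E l * E m = E m * E l)"

lemma nonadjacent_commute_mono:
  "nonadjacent_commute lo hi E \<Longrightarrow> lo \<le> lo' \<Longrightarrow> hi' \<le> hi \<Longrightarrow> nonadjacent_commute lo' hi' E"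
  unfolding nonadjacent_commute_def by (meson order_trans)

lemma nonadjacent_commute_fun_upd_top:
  assumes "nonadjacent_commute lo hi E"
    and "\<And>l. lo \<le> l \<Longrightarrow> l + 1 < hi \<Longrightarrow> E l * x = x * E l"
  shows "nonadjacent_commute lo hi (E(hi := x))"
  using assms unfolding nonadjacent_commute_def by auto

lemma qbracket_assoc:
  fixes q a b c :: "'a::ring_1"
  assumes central: "\<And>x. q * x = x * q" and ac: "a * c = c * a"
  shows "qbracket q (qbracket q a b) c = qbracket q a (qbracket q b c)"
proof -
  have qleft: "a * (q * y) = q * (a * y)" "b * (q * y) = q * (b * y)" "c * (q * y) = q * (c * y)"
    for y by (metis central mult.assoc)+
  have ac': "a * (c * y) = c * (a * y)" for y by (metis ac mult.assoc)
  have "qbracket q (qbracket q a b) c = a*(b*c) - q*(b*(a*c)) - q*(c*(a*b)) + q*(q*(c*(b*a)))"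
    by (simp add: qbracket_def algebra_simps qleft)
  also have "\<dots> = a*(b*c) - q*(b*(c*a)) - q*(a*(c*b)) + q*(q*(c*(b*a)))"
    by (simp add: ac ac')
  also have "\<dots> = qbracket q a (qbracket q b c)"
    by (simp add: qbracket_def algebra_simps qleft)
  finally show ?thesis .
qed

lemma qbracket_commute:
  fixes q x y z :: "'a::ring_1"
  assumes central: "\<And>x. q * x = x * q" and xy: "x * y = y * x" and zy: "z * y = y * z"
  shows "qbracket q x z * y = y * qbracket q x z"
proof -
  have qleft: "y * (q * w) = q * (y * w)" for w by (metis central mult.assoc)
  have "qbracket q x z * y = - (x * (z * y)) + q * (z * (x * y))"
    by (simp add: qbracket_def algebra_simps)
  also have "\<dots> = - (y * (x * z)) + q * (y * (z * x))"
    by (metis xy zy mult.assoc)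
  also have "\<dots> = y * qbracket q x z"
    by (simp add: qbracket_def algebra_simps qleft)
  finally show ?thesis .
qed

lemma Eup_Suc_qbracket:
  "Eup s E i (Suc d) = qbracket (s (inverse qv)) (Eup s E i d) (E (i + d + 1))"
  by (simp add: qbracket_def)

lemma Edn_Suc_qbracket:
  "Edn s F i (Suc d) = qbracket (s qv) (F (i + d + 1)) (Edn s F i d)"
  by (simp add: qbracket_def)

lemma Eup_cong: "(\<And>l. i \<le> l \<Longrightarrow> l \<le> i + d \<Longrightarrow> E l = E' l) \<Longrightarrow> Eup s E i d = Eup s E' i d"
  by (induction d) auto

lemma Edn_cong: "(\<And>l. i \<le> l \<Longrightarrow> l \<le> i + d \<Longrightarrow> F l = F' l) \<Longrightarrow> Edn s F i d = Edn s F' i d"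
  by (induction d) auto

lemma Ebup_eq_Eup_fun_upd: "Ebup s E Eb i d = Eup s (E(i + d := Eb (i + d))) i d"
proof (cases d)
  case (Suc d')
  have "Eup s E i d' = Eup s (E(i + d := Eb (i + d))) i d'"
    by (rule Eup_cong) (use Suc in auto)
  then show ?thesis using Suc by simp
qed simp

lemma Ebdn_eq_Edn_fun_upd: "Ebdn s F Fb i d = Edn s (F(i + d := Fb (i + d))) i d"
proof (cases d)
  case (Suc d')
  have "Edn s F i d' = Edn s (F(i + d := Fb (i + d))) i d'"
    by (rule Edn_cong) (use Suc in auto)
  then show ?thesis using Suc by simp
qed simp

context
  fixes s :: "qfield \<Rightarrow> 'a::ring_1"
  assumes central_s: "\<And>c x. s c * x = x * s c"
begin

lemma Eup_commute:
  assumes "\<And>l. i \<le> l \<Longrightarrow> l \<le> i + d \<Longrightarrow> E l * y = y * E l"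
  shows "Eup s E i d * y = y * Eup s E i d"
  using assms
proof (induction d)
  case (Suc d)
  then show ?case
    unfolding Eup_Suc_qbracket by (intro qbracket_commute central_s) auto
qed simp

lemma Edn_commute:
  assumes "\<And>l. i \<le> l \<Longrightarrow> l \<le> i + d \<Longrightarrow> F l * y = y * F l"
  shows "Edn s F i d * y = y * Edn s F i d"
  using assms
proof (induction d)
  case (Suc d)
  then show ?case
    unfolding Edn_Suc_qbracket by (intro qbracket_commute central_s) auto
qed simp

lemma Eup_split:
  assumes "nonadjacent_commute i (i + a + b + 1) E"
  shows "Eup s E i (a + b + 1) = qbracket (s (inverse qv)) (Eup s E i a) (Eup s E (i + a + 1) b)"
  using assms
proof (induction b)
  case 0
  then show ?case by (simp add: qbracket_def)
next
  case (Suc b)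
  let ?q = "s (inverse qv)" and ?m = "i + a + b + 2"
  have IH: "Eup s E i (a + b + 1) = qbracket ?q (Eup s E i a) (Eup s E (i + a + 1) b)"
    by (rule Suc.IH, rule nonadjacent_commute_mono[OF Suc.prems]) auto
  have "Eup s E i a * E ?m = E ?m * Eup s E i a"
    by (rule Eup_commute) (use Suc.prems in \<open>auto simp: nonadjacent_commute_def\<close>)
  note assoc = qbracket_assoc[OF central_s this]
  have "Eup s E i (a + Suc b + 1) = qbracket ?q (Eup s E i (a + b + 1)) (E ?m)"
    using Eup_Suc_qbracket[of s E i "a + b + 1"] by (simp add: add.assoc)
  also have "\<dots> = qbracket ?q (Eup s E i a) (qbracket ?q (Eup s E (i + a + 1) b) (E ?m))"
    unfolding IH assoc ..
  also have "\<dots> = qbracket ?q (Eup s E i a) (Eup s E (i + a + 1) (Suc b))"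
    by (simp add: Eup_Suc_qbracket add.assoc del: Eup.simps)
  finally show ?case .
qed

lemma Edn_split:
  assumes "nonadjacent_commute i (i + a + b + 1) F"
  shows "Edn s F i (a + b + 1) = qbracket (s qv) (Edn s F (i + a + 1) b) (Edn s F i a)"
  using assms
proof (induction b)
  case 0
  then show ?case by (simp add: qbracket_def)
next
  case (Suc b)
  let ?q = "s qv" and ?m = "i + a + b + 2"
  have IH: "Edn s F i (a + b + 1) = qbracket ?q (Edn s F (i + a + 1) b) (Edn s F i a)"
    by (rule Suc.IH, rule nonadjacent_commute_mono[OF Suc.prems]) auto
  have "Edn s F i a * F ?m = F ?m * Edn s F i a"
    by (rule Edn_commute) (use Suc.prems in \<open>auto simp: nonadjacent_commute_def\<close>)
  note assoc = qbracket_assoc[OF central_s this[symmetric]]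
  have "Edn s F i (a + Suc b + 1) = qbracket ?q (F ?m) (Edn s F i (a + b + 1))"
    using Edn_Suc_qbracket[of s F i "a + b + 1"] by (simp add: add.assoc)
  also have "\<dots> = qbracket ?q (qbracket ?q (F ?m) (Edn s F (i + a + 1) b)) (Edn s F i a)"
    unfolding IH assoc ..
  also have "\<dots> = qbracket ?q (Edn s F (i + a + 1) (Suc b)) (Edn s F i a)"
    by (simp add: Edn_Suc_qbracket add.assoc del: Edn.simps)
  finally show ?case .
qed

lemma Eroot_upper_split:
  assumes "i < k" "k < j" "nonadjacent_commute i (j - 1) E"
  shows "Eroot s E F i j = qbracket (s (inverse qv)) (Eroot s E F i k) (Eroot s E F k j)"
proof -
  define a b where "a = k - i - 1" and "b = j - k - 1"
  have "k = i + a + 1" "j = i + a + b + 2"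
    using assms(1,2) unfolding a_def b_def by auto
  then show ?thesis
    using Eup_split[of i a b E] assms by (simp add: Eroot_def)
qed

lemma Eroot_lower_split:
  assumes "i < k" "k < j" "nonadjacent_commute i (j - 1) F"
  shows "Eroot s E F j i = qbracket (s qv) (Eroot s E F j k) (Eroot s E F k i)"
proof -
  define a b where "a = k - i - 1" and "b = j - k - 1"
  have "k = i + a + 1" "j = i + a + b + 2"
    using assms(1,2) unfolding a_def b_def by auto
  then show ?thesis
    using Edn_split[of i a b F] assms by (simp add: Eroot_def)
qed

end

lemma Ebroot_upper_eq_Eroot: "a < b \<Longrightarrow> Ebroot s E Eb F Fb a b = Eroot s (E(b - 1 := Eb (b - 1))) F a b"
  using Ebup_eq_Eup_fun_upd[of s E Eb a "b - a - 1"] by (simp add: Ebroot_def Eroot_def)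

lemma Ebroot_lower_eq_Eroot: "b < a \<Longrightarrow> Ebroot s E Eb F Fb a b = Eroot s E (F(a - 1 := Fb (a - 1))) a b"
  using Ebdn_eq_Edn_fun_upd[of s F Fb b "a - b - 1"] by (simp add: Ebroot_def Eroot_def)

lemma Eroot_upper_fun_upd: "a < b \<Longrightarrow> b \<le> m \<Longrightarrow> Eroot s (E(m := x)) F a b = Eroot s E F a b"
  unfolding Eroot_def by (simp, rule Eup_cong) auto

lemma Eroot_lower_fun_upd: "b < a \<Longrightarrow> a \<le> m \<Longrightarrow> Eroot s E (F(m := x)) a b = Eroot s E F a b"
  unfolding Eroot_def by (simp, rule Edn_cong) auto

lemma qq_rels_nonadjacent_commute:
  assumes rels: "qq_rels n s K Ki Kb E Eb F Fb" and "1 \<le> lo" "hi < n"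
  shows "nonadjacent_commute lo hi E" "nonadjacent_commute lo hi F"
    "nonadjacent_commute lo hi (E(hi := Eb hi))" "nonadjacent_commute lo hi (F(hi := Fb hi))"
proof -
  have far: "\<forall>l\<in>{1..n-1}. \<forall>m\<in>{1..n-1}. l > m + 1 \<or> m > l + 1 \<longrightarrow>
      E l * E m = E m * E l \<and> F l * F m = F m * F l \<and>
      Eb l * Eb m = - (Eb m * Eb l) \<and> Fb l * Fb m = - (Fb m * Fb l)"
    using rels unfolding qq_rels_def Let_def by (elim conjE) assumption
  have far_bar: "\<forall>l\<in>{1..n-1}. \<forall>m\<in>{1..n-1}. l \<noteq> m + 1 \<and> m \<noteq> l + 1 \<longrightarrow>
      E l * Eb m = Eb m * E l \<and> F l * Fb m = Fb m * F l"
    using rels unfolding qq_rels_def Let_def by (elim conjE) assumption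
  have range: "l \<in> {1..n-1}" if "lo \<le> l" "l \<le> hi" for l
    using that assms(2,3) by auto
  have "E l * E m = E m * E l" "F l * F m = F m * F l"
    if "lo \<le> l" "l + 1 < m" "m \<le> hi" for l m
    using far range[of l] range[of m] that by auto
  then show E: "nonadjacent_commute lo hi E" and F: "nonadjacent_commute lo hi F"
    unfolding nonadjacent_commute_def by blast+
  have "E l * Eb hi = Eb hi * E l" "F l * Fb hi = Fb hi * F l"
    if "lo \<le> l" "l + 1 < hi" for l
    using far_bar range[of l] range[of hi] that by auto
  then show "nonadjacent_commute lo hi (E(hi := Eb hi))" "nonadjacent_commute lo hi (F(hi := Fb hi))"
    by (auto intro: nonadjacent_commute_fun_upd_top E F)
qed

theorem corollary2p5:
  fixes s :: "qfield \<Rightarrow> 'a::ring_1"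
    and K Ki Kb E Eb F Fb :: "nat \<Rightarrow> 'a"
    and n i k j :: nat
  assumes "qalg s"
    and "qq_rels n s K Ki Kb E Eb F Fb"
    and "1 \<le> i" and "i < k" and "k < j" and "j < n"
  shows "Eroot s E F i j = - (Eroot s E F i k * Eroot s E F k j) + s (inverse qv) * Eroot s E F k j * Eroot s E F i k \<and>
    Ebroot s E Eb F Fb i j = - (Eroot s E F i k * Ebroot s E Eb F Fb k j) + s (inverse qv) * Ebroot s E Eb F Fb k j * Eroot s E F i k \<and>
    Eroot s E F j i = - (Eroot s E F j k * Eroot s E F k i) + s qv * Eroot s E F k i * Eroot s E F j k \<and>
    Ebroot s E Eb F Fb j i = - (Ebroot s E Eb F Fb j k * Eroot s E F k i) + s qv * Eroot s E F k i * Ebroot s E Eb F Fb j k"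
proof -
  have central: "\<And>c x. s c * x = x * s c"
    using assms(1) unfolding qalg_def by blast
  have "j - 1 < n"
    using assms(6) by simp
  note commute = qq_rels_nonadjacent_commute[OF assms(2,3) this]
  note split = Eroot_upper_split[OF central assms(4,5)] Eroot_lower_split[OF central assms(4,5)]
  show ?thesis
    using split[OF commute(1)] split[OF commute(2)] split[OF commute(3)] split[OF commute(4)] assms(4,5)
    by (simp add: Ebroot_upper_eq_Eroot Ebroot_lower_eq_Eroot Eroot_upper_fun_upd Eroot_lower_fun_upd
        qbracket_def)
qed

end
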